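(* Let $q>0$, let $a:[0,\infty)\to[0,\infty)$ be continuous and let $r:[0,\infty)\to[0,q]$ be continuous. Let $\varphi\in C([-q,0],\mathbb R)$, let $x=x(\varphi)$ be the solution on $[-q,\infty)$ of $$x'(t)=-a(t)x(t-r(t)),\ t\ge0,\qquad x(t)=\varphi(t),\ -q\le t\le 0,$$ and for every integer $k\ge1$ and $h=q/k$ let $z_h=z_h(\varphi)$ be the solution of $$z_h'(t)=-a(t)\,z_h\big((i-k_i)h\big)\ \ (t\in[ih,(i+1)h),\ i\ge0),\qquad z_h(nh)=\varphi(nh),\ n=-k,\dots,0.$$ Then for every $T>0$ and every such $h$, $$\max_{0\le t\le T}|x(t)-z_h(t)|\le e^{\int_0^T a(s)ds}\Big(\int_0^T a(s)\,ds\Big)\,w_x\big(w_r(h;T)+2h;T\big),$$ and consequently $\lim_{h\to0}\max_{0\le t\le T}|x(t)-z_h(t)|=0$ for every $T>0$ (limit along $h=q/k$, $k\to\infty$).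
   Context: Here $k_i:=\lfloor r(ih)/h\rfloor$ for $i\ge0$; a solution $z_h$ is a function defined on the grid points $\{nh:n=-k,\dots,0\}$ and on $[0,\infty)$, continuous on $[0,\infty)$, differentiable except possibly at the points $ih$ (where finite one-sided derivatives exist), and satisfying the equation on each $[ih,(i+1)h)$. The moduli of continuity are $w_r(h;T)=\max\{|r(t_2)-r(t_1)|:\ 0\le t_1,t_2\le T,\ |t_2-t_1|\le h\}$ and $w_x(\delta;T)=\max\{|x(t_2)-x(t_1)|:\ -q\le t_1,t_2\le T,\ |t_2-t_1|\le \delta\}$. *)

theory Defs
  imports "HOL-Analysis.Analysis"
begin

definition mod_r :: "(real \<Rightarrow> real) \<Rightarrow> real \<Rightarrow> real \<Rightarrow> real" where
  "mod_r r h T = Sup {\<bar>r t2 - r t1\<bar> | t1 t2. 0 \<le> t1 \<and> t1 \<le> T \<and> 0 \<le> t2 \<and> t2 \<le> T \<and> \<bar>t2 - t1\<bar> \<le> h}"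

definition mod_x :: "real \<Rightarrow> (real \<Rightarrow> real) \<Rightarrow> real \<Rightarrow> real \<Rightarrow> real" where
  "mod_x q x \<delta> T = Sup {\<bar>x t2 - x t1\<bar> | t1 t2. -q \<le> t1 \<and> t1 \<le> T \<and> -q \<le> t2 \<and> t2 \<le> T \<and> \<bar>t2 - t1\<bar> \<le> \<delta>}"

definition is_sol_x :: "real \<Rightarrow> (real \<Rightarrow> real) \<Rightarrow> (real \<Rightarrow> real) \<Rightarrow> (real \<Rightarrow> real) \<Rightarrow> (real \<Rightarrow> real) \<Rightarrow> bool" where
  "is_sol_x q a r \<phi> x \<longleftrightarrow>
     continuous_on {-q..} x \<and>
     (\<forall>t\<in>{-q..0}. x t = \<phi> t) \<and>
     (\<forall>t\<ge>0. (x has_real_derivative (- a t * x (t - r t))) (at t within {0..}))"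

definition kidx :: "(real \<Rightarrow> real) \<Rightarrow> real \<Rightarrow> nat \<Rightarrow> int" where
  "kidx r h i = \<lfloor>r (real i * h) / h\<rfloor>"

definition is_sol_z :: "real \<Rightarrow> (real \<Rightarrow> real) \<Rightarrow> (real \<Rightarrow> real) \<Rightarrow> (real \<Rightarrow> real) \<Rightarrow> nat \<Rightarrow> (real \<Rightarrow> real) \<Rightarrow> bool" where
  "is_sol_z q a r \<phi> k z \<longleftrightarrow>
     (let h = q / real k in
       (\<forall>n::int. - int k \<le> n \<and> n \<le> 0 \<longrightarrow> z (real_of_int n * h) = \<phi> (real_of_int n * h)) \<and>
       continuous_on {0..} z \<and>
       (\<forall>i::nat. \<forall>t. real i * h \<le> t \<and> t < real (Suc i) * h \<longrightarrow>
          (z has_real_derivative (- a t * z (real_of_int (int i - kidx r h i) * h)))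
            (at t within {real i * h..<real (Suc i) * h})))"

end

theory Submission
  imports Defs
begin

text \<open>The error \<open>e = x - z\<^sub>h\<close> satisfies, on each grid interval \<open>[i h, (i + 1) h)\<close>,
  \<open>e' t = - a t ((x (t - r t) - x g\<^sub>i) + e g\<^sub>i)\<close> with the lagged grid point
  \<open>g\<^sub>i = (i - k\<^sub>i) h \<le> i h\<close>. Since \<open>|t - r t - g\<^sub>i| \<le> w\<^sub>r(h; T) + 2 h\<close>, the first
  summand is at most \<open>W = w\<^sub>x(w\<^sub>r(h; T) + 2 h; T)\<close>, so \<open>|e'| \<le> a (W + |e g\<^sub>i|)\<close>.
  Marching through the grid and comparing with the solution \<open>u = W (exp A - 1)\<close> of
  \<open>u' = a (W + u)\<close>, \<open>u 0 = 0\<close>, where \<open>A\<close> is the primitive of \<open>a\<close> vanishing at \<open>0\<close>, gives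
  \<open>|e| \<le> u \<le> W A exp A\<close>. Uniform continuity of \<open>r\<close> and \<open>x\<close> makes \<open>W\<close> tend to \<open>0\<close>
  with \<open>h\<close>.\<close>

definition modulus :: "(real \<Rightarrow> real) \<Rightarrow> real \<Rightarrow> real \<Rightarrow> real \<Rightarrow> real" where
  "modulus f lo hi \<delta> =
     Sup {\<bar>f t2 - f t1\<bar> | t1 t2. lo \<le> t1 \<and> t1 \<le> hi \<and> lo \<le> t2 \<and> t2 \<le> hi \<and> \<bar>t2 - t1\<bar> \<le> \<delta>}"

lemma mod_r_eq_modulus: "mod_r r \<delta> T = modulus r 0 T \<delta>"
  by (simp add: mod_r_def modulus_def)

lemma mod_x_eq_modulus: "mod_x q x \<delta> T = modulus x (- q) T \<delta>"
  by (simp add: mod_x_def modulus_def)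

lemma bdd_above_modulus_set:
  fixes f :: "real \<Rightarrow> real"
  assumes "continuous_on {lo..hi} f"
  shows "bdd_above {\<bar>f t2 - f t1\<bar> | t1 t2. lo \<le> t1 \<and> t1 \<le> hi \<and> lo \<le> t2 \<and> t2 \<le> hi \<and> \<bar>t2 - t1\<bar> \<le> \<delta>}"
proof -
  obtain B where B: "\<forall>t\<in>{lo..hi}. \<bar>f t\<bar> \<le> B"
    using compact_imp_bounded[OF compact_continuous_image[OF assms compact_Icc]]
    by (auto simp: bounded_iff)
  have "\<bar>f t2 - f t1\<bar> \<le> 2 * B" if "t1 \<in> {lo..hi}" "t2 \<in> {lo..hi}" for t1 t2
    using B that by (smt (verit))
  then show ?thesis
    by (intro bdd_aboveI[of _ "2 * B"]) auto
qed

lemma abs_diff_le_modulus: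
  assumes "continuous_on {lo..hi} f" "t1 \<in> {lo..hi}" "t2 \<in> {lo..hi}" "\<bar>t2 - t1\<bar> \<le> \<delta>"
  shows "\<bar>f t2 - f t1\<bar> \<le> modulus f lo hi \<delta>"
  unfolding modulus_def by (rule cSup_upper[OF _ bdd_above_modulus_set[OF assms(1)]]) (use assms in auto)

lemma modulus_le:
  assumes "lo \<le> hi" "0 \<le> \<delta>"
    and "\<And>t1 t2. t1 \<in> {lo..hi} \<Longrightarrow> t2 \<in> {lo..hi} \<Longrightarrow> \<bar>t2 - t1\<bar> \<le> \<delta> \<Longrightarrow> \<bar>f t2 - f t1\<bar> \<le> c"
  shows "modulus f lo hi \<delta> \<le> c"
  unfolding modulus_def by (rule cSup_least) (use assms in force)+

lemma modulus_nonneg: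
  assumes "continuous_on {lo..hi} f" "lo \<le> hi" "0 \<le> \<delta>"
  shows "0 \<le> modulus f lo hi \<delta>"
  using abs_diff_le_modulus[OF assms(1), of lo lo \<delta>] assms by simp

lemma modulus_tendsto_0:
  assumes "continuous_on {lo..hi} f" "lo \<le> hi"
  shows "(modulus f lo hi \<longlongrightarrow> 0) (at_right 0)"
proof (rule tendstoI)
  fix \<epsilon> :: real
  assume "\<epsilon> > 0"
  then obtain d where "d > 0" and d:
    "\<And>t1 t2. t1 \<in> {lo..hi} \<Longrightarrow> t2 \<in> {lo..hi} \<Longrightarrow> dist t2 t1 < d \<Longrightarrow> dist (f t2) (f t1) < \<epsilon> / 2"
    using compact_uniformly_continuous[OF assms(1) compact_Icc]
    unfolding uniformly_continuous_on_def by (metis half_gt_zero)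
  have "dist (modulus f lo hi \<delta>) 0 < \<epsilon>" if "0 < \<delta>" "\<delta> < d" for \<delta>
  proof -
    have "modulus f lo hi \<delta> \<le> \<epsilon> / 2"
    proof (rule modulus_le)
      fix t1 t2
      assume "t1 \<in> {lo..hi}" "t2 \<in> {lo..hi}" "\<bar>t2 - t1\<bar> \<le> \<delta>"
      with d[of t1 t2] that show "\<bar>f t2 - f t1\<bar> \<le> \<epsilon> / 2"
        by (simp add: dist_real_def)
    qed (use assms(2) that in auto)
    with modulus_nonneg[OF assms] that \<open>\<epsilon> > 0\<close> show ?thesis by simp
  qed
  with \<open>d > 0\<close> show "\<forall>\<^sub>F \<delta> in at_right 0. dist (modulus f lo hi \<delta>) 0 < \<epsilon>"
    unfolding eventually_at_right_field by blast
qed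

lemma integral_upper_has_real_derivative:
  fixes f :: "real \<Rightarrow> real"
  assumes "continuous_on {c..} f" "c < s"
  shows "((\<lambda>t. integral {c..t} f) has_real_derivative f s) (at s)"
proof -
  have "((\<lambda>t. integral {c..t} f) has_real_derivative f s) (at s within {c..s + 1})"
    by (rule integral_has_real_derivative) (use continuous_on_subset[OF assms(1)] assms(2) in auto)
  moreover have "at s within {c..s + 1} = at s"
    by (rule at_within_interior) (use assms(2) in auto)
  ultimately show ?thesis by simp
qed

lemma integral_upper_mono:
  fixes f :: "real \<Rightarrow> real"
  assumes "continuous_on {c..} f" "\<And>t. c \<le> t \<Longrightarrow> 0 \<le> f t" "s \<le> t"
  shows "integral {c..s} f \<le> integral {c..t} f"
proof -
  have int: "f integrable_on {c..t'}" for t'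
    by (rule integrable_continuous_interval, rule continuous_on_subset[OF assms(1)]) auto
  show ?thesis
  proof (cases "c \<le> s")
    case True
    then show ?thesis
      by (intro integral_subset_le int) (use assms in auto)
  next
    case False
    then show ?thesis
      using integral_nonneg[OF int[of t]] assms(2) by simp
  qed
qed

lemma abs_le_of_abs_deriv_le:
  fixes e u :: "real \<Rightarrow> real"
  assumes "c \<le> t" "continuous_on {c..t} e" "continuous_on {c..t} u"
    and "\<And>s. c < s \<Longrightarrow> s < t \<Longrightarrow> (e has_real_derivative e' s) (at s)"
    and "\<And>s. c < s \<Longrightarrow> s < t \<Longrightarrow> (u has_real_derivative u' s) (at s)"
    and "\<And>s. c < s \<Longrightarrow> s < t \<Longrightarrow> \<bar>e' s\<bar> \<le> u' s"
    and "\<bar>e c\<bar> \<le> u c"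
  shows "\<bar>e t\<bar> \<le> u t"
proof -
  have "u c - e c \<le> u t - e t"
  proof (rule DERIV_nonneg_imp_increasing_open[OF assms(1)])
    fix s assume "c < s" "s < t"
    with assms(4-6)[of s] show "\<exists>y. ((\<lambda>s. u s - e s) has_real_derivative y) (at s) \<and> 0 \<le> y"
      by (intro exI[of _ "u' s - e' s"] conjI DERIV_diff) (auto simp: abs_le_iff)
  qed (use assms(2,3) in \<open>intro continuous_intros\<close>)
  moreover have "u c + e c \<le> u t + e t"
  proof (rule DERIV_nonneg_imp_increasing_open[OF assms(1)])
    fix s assume "c < s" "s < t"
    with assms(4-6)[of s] show "\<exists>y. ((\<lambda>s. u s + e s) has_real_derivative y) (at s) \<and> 0 \<le> y"
      by (intro exI[of _ "u' s + e' s"] conjI DERIV_add) (auto simp: abs_le_iff)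
  qed (use assms(2,3) in \<open>intro continuous_intros\<close>)
  ultimately show ?thesis using assms(7) by linarith
qed

lemma exp_minus_one_le_mult_exp:
  fixes y :: real
  assumes "0 \<le> y"
  shows "exp y - 1 \<le> y * exp y"
proof -
  have "(1 - y) * exp y \<le> exp (- y) * exp y"
    using exp_ge_add_one_self[of "- y"] by (intro mult_right_mono) auto
  then show ?thesis by (simp add: exp_minus algebra_simps)
qed

locale pca_approximation =
  fixes q T :: real and a r \<phi> x z :: "real \<Rightarrow> real" and k :: nat
  assumes q_pos: "q > 0" and k_ge_1: "k \<ge> 1" and T_pos: "T > 0"
    and a_cont: "continuous_on {0..} a" and a_nonneg: "\<forall>t\<ge>0. a t \<ge> 0"
    and r_cont: "continuous_on {0..} r" and r_range: "\<forall>t\<ge>0. 0 \<le> r t \<and> r t \<le> q"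
    and x_sol: "is_sol_x q a r \<phi> x" and z_sol: "is_sol_z q a r \<phi> k z"
begin

definition h :: real where "h = q / real k"

definition lag :: "nat \<Rightarrow> real" where "lag i = real_of_int (int i - kidx r h i) * h"

definition int_a :: "real \<Rightarrow> real" where "int_a t = integral {0..t} a"

definition W :: real where "W = mod_x q x (mod_r r h T + 2 * h) T"

definition majorant :: "real \<Rightarrow> real" where "majorant t = W * (exp (int_a t) - 1)"

lemma h_pos: "0 < h"
  using q_pos k_ge_1 by (simp add: h_def)

lemma k_mul_h: "real k * h = q"
  using k_ge_1 by (simp add: h_def)

lemma x_cont: "continuous_on {-q..} x"
  and x_initial: "t \<in> {-q..0} \<Longrightarrow> x t = \<phi> t"
  and x_deriv: "0 \<le> t \<Longrightarrow> (x has_real_derivative - a t * x (t - r t)) (at t within {0..})"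
  using x_sol unfolding is_sol_x_def by blast+

lemma z_initial: "- int k \<le> n \<Longrightarrow> n \<le> 0 \<Longrightarrow> z (real_of_int n * h) = \<phi> (real_of_int n * h)"
  and z_cont: "continuous_on {0..} z"
  and z_deriv: "real i * h \<le> t \<Longrightarrow> t < real (Suc i) * h \<Longrightarrow>
    (z has_real_derivative - a t * z (real_of_int (int i - kidx r h i) * h))
      (at t within {real i * h..<real (Suc i) * h})"
  using z_sol unfolding is_sol_z_def h_def Let_def by blast+

lemma x_eq_z_initial_grid:
  assumes "- int k \<le> n" "n \<le> 0"
  shows "x (real_of_int n * h) = z (real_of_int n * h)"
proof -
  have "- q \<le> real_of_int n * h"
    using mult_right_mono[of "- real k" "real_of_int n" h] assms(1) h_pos k_mul_h by simp
  moreover have "real_of_int n * h \<le> 0"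
    using assms(2) h_pos by (simp add: mult_nonpos_nonneg)
  ultimately show ?thesis
    using x_initial z_initial[OF assms] by simp
qed

lemma r_cont_T: "continuous_on {0..T} r"
  by (rule continuous_on_subset[OF r_cont]) auto

lemma x_cont_T: "continuous_on {-q..T} x"
  by (rule continuous_on_subset[OF x_cont]) auto

lemma mod_r_nonneg: "0 \<le> mod_r r h T"
  unfolding mod_r_eq_modulus by (rule modulus_nonneg[OF r_cont_T]) (use T_pos h_pos in auto)

lemma W_nonneg: "0 \<le> W"
  unfolding W_def mod_x_eq_modulus
  by (rule modulus_nonneg[OF x_cont_T]) (use T_pos q_pos h_pos mod_r_nonneg in auto)

lemma abs_diff_r_le:
  "t1 \<in> {0..T} \<Longrightarrow> t2 \<in> {0..T} \<Longrightarrow> \<bar>t2 - t1\<bar> \<le> h \<Longrightarrow> \<bar>r t2 - r t1\<bar> \<le> mod_r r h T"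
  unfolding mod_r_eq_modulus by (rule abs_diff_le_modulus[OF r_cont_T])

lemma abs_diff_x_le_W:
  "t1 \<in> {-q..T} \<Longrightarrow> t2 \<in> {-q..T} \<Longrightarrow> \<bar>t2 - t1\<bar> \<le> mod_r r h T + 2 * h \<Longrightarrow>
    \<bar>x t2 - x t1\<bar> \<le> W"
  unfolding W_def mod_x_eq_modulus by (rule abs_diff_le_modulus[OF x_cont_T])

lemma kidx_bounds:
  shows "real_of_int (kidx r h i) * h \<le> r (real i * h)"
    and "r (real i * h) < real_of_int (kidx r h i) * h + h"
    and "0 \<le> kidx r h i" and "kidx r h i \<le> int k"
proof -
  have r_i: "0 \<le> r (real i * h)" "r (real i * h) \<le> q"
    using r_range h_pos by auto
  have "real_of_int (kidx r h i) \<le> r (real i * h) / h" "r (real i * h) / h < real_of_int (kidx r h i) + 1"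
    unfolding kidx_def by linarith+
  then show lower: "real_of_int (kidx r h i) * h \<le> r (real i * h)"
    and upper: "r (real i * h) < real_of_int (kidx r h i) * h + h"
    using h_pos by (simp_all add: field_simps)
  have "0 < (real_of_int (kidx r h i) + 1) * h"
    using upper r_i by (simp add: algebra_simps)
  then show "0 \<le> kidx r h i"
    using h_pos by (simp add: zero_less_mult_iff)
  have "real_of_int (kidx r h i) * h \<le> real k * h"
    using lower r_i k_mul_h by linarith
  then show "kidx r h i \<le> int k"
    using h_pos by simp
qed

lemma lag_eq: "lag i = real i * h - real_of_int (kidx r h i) * h"
  by (simp add: lag_def left_diff_distrib)

lemma lag_range: "- q \<le> lag i" "lag i \<le> real i * h"
  using kidx_bounds[of i] r_range h_pos unfolding lag_eq
  by (smt (verit, best) mult_nonneg_nonneg of_int_nonneg of_nat_0_le_iff)+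

lemma x_eq_z_negative_lag: "lag i < 0 \<Longrightarrow> x (lag i) = z (lag i)"
  unfolding lag_def
  by (rule x_eq_z_initial_grid) (use kidx_bounds(4)[of i] h_pos in \<open>auto simp: mult_less_0_iff\<close>)

text \<open>\<open>s\<close> and \<open>i h\<close> differ by at most \<open>h\<close>, flooring in \<open>k\<^sub>i\<close> loses less than \<open>h\<close>,
  and \<open>r\<close> moves by at most \<open>mod_r r h T\<close> between \<open>i h\<close> and \<open>s\<close>.\<close>
lemma lag_close:
  assumes "real i * h \<le> s" "s \<le> real (Suc i) * h" "s \<le> T"
  shows "\<bar>s - r s - lag i\<bar> \<le> mod_r r h T + 2 * h"
proof -
  have "0 \<le> real i * h"
    using h_pos by simp
  with assms have "real i * h \<in> {0..T}" "s \<in> {0..T}"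
    by auto
  then have "\<bar>r s - r (real i * h)\<bar> \<le> mod_r r h T"
    by (rule abs_diff_r_le) (use assms in \<open>simp add: algebra_simps\<close>)
  moreover have "s - r s - lag i
      = (s - real i * h) + (real_of_int (kidx r h i) * h - r (real i * h)) + (r (real i * h) - r s)"
    by (simp add: lag_eq)
  moreover have "s - real i * h \<le> h"
    using assms(2) by (simp add: algebra_simps)
  ultimately show ?thesis
    using assms(1) kidx_bounds(1,2)[of i] h_pos by (simp only: abs_le_iff) linarith
qed

lemma int_a_mono: "s \<le> t \<Longrightarrow> int_a s \<le> int_a t"
  unfolding int_a_def by (rule integral_upper_mono[OF a_cont]) (use a_nonneg in auto)

lemma int_a_nonneg: "0 \<le> int_a t"
  using int_a_mono[of 0 t] by (cases "0 \<le> t") (auto simp: int_a_def)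

lemma majorant_0: "majorant 0 = 0"
  by (simp add: majorant_def int_a_def)

lemma majorant_mono: "s \<le> t \<Longrightarrow> majorant s \<le> majorant t"
  unfolding majorant_def using int_a_mono W_nonneg by (simp add: mult_left_mono)

lemma majorant_cont: "continuous_on {0..t} majorant"
  unfolding majorant_def int_a_def
  by (intro continuous_intros indefinite_integral_continuous_1 integrable_continuous_interval
      continuous_on_subset[OF a_cont]) auto

lemma majorant_deriv: "0 < s \<Longrightarrow> (majorant has_real_derivative a s * (W + majorant s)) (at s)"
  unfolding majorant_def int_a_def
  by (auto intro!: derivative_eq_intros integral_upper_has_real_derivative[OF a_cont]
      simp: algebra_simps)

lemma x_minus_z_deriv:
  assumes "real i * h < s" "s < real (Suc i) * h"
  shows "((\<lambda>t. x t - z t) has_real_derivative - a s * (x (s - r s) - z (lag i))) (at s)"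
proof -
  have "0 \<le> real i * h"
    using h_pos by simp
  with assms(1) have "0 < s"
    by linarith
  then have "(x has_real_derivative - a s * x (s - r s)) (at s within {0<..})"
    by (intro DERIV_subset[OF x_deriv]) auto
  then have dx: "(x has_real_derivative - a s * x (s - r s)) (at s)"
    using at_within_open[of s "{0<..}"] \<open>0 < s\<close> by simp
  have "(z has_real_derivative - a s * z (lag i)) (at s within {real i * h<..<real (Suc i) * h})"
    unfolding lag_def by (rule DERIV_subset[OF z_deriv]) (use assms in auto)
  then have dz: "(z has_real_derivative - a s * z (lag i)) (at s)"
    using at_within_open[of s "{real i * h<..<real (Suc i) * h}"] assms by simp
  show ?thesis
    using DERIV_diff[OF dx dz] by (simp add: algebra_simps)
qed

lemma x_minus_z_deriv_bound:
  assumes "real i * h \<le> s" "s \<le> real (Suc i) * h" "s \<le> T"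
    and lag_bound: "\<bar>x (lag i) - z (lag i)\<bar> \<le> majorant (real i * h)"
  shows "\<bar>- a s * (x (s - r s) - z (lag i))\<bar> \<le> a s * (W + majorant s)"
proof -
  have "0 \<le> real i * h"
    using h_pos by simp
  with assms(1) have "0 \<le> s"
    by linarith
  then have as: "0 \<le> a s"
    using a_nonneg by simp
  have "lag i \<in> {-q..T}"
    using lag_range[of i] assms by simp
  moreover have "s - r s \<in> {-q..T}"
    using r_range \<open>0 \<le> s\<close> \<open>s \<le> T\<close> by force
  ultimately have "\<bar>x (s - r s) - x (lag i)\<bar> \<le> W"
    using lag_close[OF assms(1-3)] by (intro abs_diff_x_le_W) simp_all
  moreover have "majorant (real i * h) \<le> majorant s"
    by (rule majorant_mono[OF assms(1)])
  ultimately have "\<bar>x (s - r s) - z (lag i)\<bar> \<le> W + majorant s"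
    using lag_bound by linarith
  then show ?thesis
    using as by (simp add: abs_mult mult_left_mono)
qed

lemma abs_x_minus_z_at_lag_le:
  assumes upto: "\<And>t. 0 \<le> t \<Longrightarrow> t \<le> real i * h \<Longrightarrow> \<bar>x t - z t\<bar> \<le> majorant t"
  shows "\<bar>x (lag i) - z (lag i)\<bar> \<le> majorant (real i * h)"
proof (cases "lag i < 0")
  case True
  then show ?thesis
    using x_eq_z_negative_lag majorant_mono[of 0] majorant_0 h_pos by simp
next
  case False
  then have "\<bar>x (lag i) - z (lag i)\<bar> \<le> majorant (lag i)"
    using lag_range(2) by (intro upto) simp_all
  with majorant_mono[OF lag_range(2)[of i]] show ?thesis
    by simp
qed

text \<open>Induction over the grid intervals: on \<open>[i h, (i + 1) h]\<close> the approximation only looks back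
  to \<open>lag i \<le> i h\<close>, where the bound is already known.\<close>
lemma abs_x_minus_z_le_majorant_upto:
  "0 \<le> t \<Longrightarrow> t \<le> T \<Longrightarrow> t \<le> real i * h \<Longrightarrow> \<bar>x t - z t\<bar> \<le> majorant t"
proof (induction i arbitrary: t)
  case 0
  then show ?case
    using x_eq_z_initial_grid[of 0] majorant_0 by simp
next
  case (Suc i)
  show ?case
  proof (cases "t \<le> real i * h")
    case True
    with Suc show ?thesis by blast
  next
    case False
    define c where "c = real i * h"
    have "0 \<le> c" "c < t" "t \<le> c + h"
      using h_pos False Suc.prems by (simp_all add: c_def algebra_simps)
    have lag_bound: "\<bar>x (lag i) - z (lag i)\<bar> \<le> majorant c"
      unfolding c_def using Suc \<open>c < t\<close>
      by (intro abs_x_minus_z_at_lag_le) (simp_all add: c_def)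
    show ?thesis
    proof (rule abs_le_of_abs_deriv_le[where c = c and t = t and e = "\<lambda>t. x t - z t" and u = majorant
          and e' = "\<lambda>s. - a s * (x (s - r s) - z (lag i))" and u' = "\<lambda>s. a s * (W + majorant s)"])
      show "c \<le> t"
        using \<open>c < t\<close> by simp
      show "continuous_on {c..t} (\<lambda>t. x t - z t)"
        by (intro continuous_intros continuous_on_subset[OF x_cont] continuous_on_subset[OF z_cont])
          (use \<open>0 \<le> c\<close> q_pos in auto)
      show "continuous_on {c..t} majorant"
        by (rule continuous_on_subset[OF majorant_cont]) (use \<open>0 \<le> c\<close> in auto)
      show "\<bar>x c - z c\<bar> \<le> majorant c"
        using \<open>0 \<le> c\<close> \<open>c < t\<close> Suc.prems by (intro Suc.IH) (simp_all add: c_def)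
      fix s
      assume s: "c < s" "s < t"
      then have si: "real i * h < s" "s < real (Suc i) * h" "s \<le> T"
        using \<open>t \<le> c + h\<close> Suc.prems by (simp_all add: c_def algebra_simps)
      show "((\<lambda>t. x t - z t) has_real_derivative - a s * (x (s - r s) - z (lag i))) (at s)"
        by (rule x_minus_z_deriv[OF si(1,2)])
      show "\<bar>- a s * (x (s - r s) - z (lag i))\<bar> \<le> a s * (W + majorant s)"
        by (rule x_minus_z_deriv_bound[OF less_imp_le[OF si(1)] less_imp_le[OF si(2)] si(3)
            lag_bound[unfolded c_def]])
      show "(majorant has_real_derivative a s * (W + majorant s)) (at s)"
        by (rule majorant_deriv) (use s \<open>0 \<le> c\<close> in auto)
    qed
  qed
qed

lemma abs_x_minus_z_le_majorant:
  assumes "t \<in> {0..T}"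
  shows "\<bar>x t - z t\<bar> \<le> majorant t"
proof (rule abs_x_minus_z_le_majorant_upto)
  have "t / h \<le> real (nat \<lceil>t / h\<rceil>)"
    by (rule real_nat_ceiling_ge)
  then show "t \<le> real (nat \<lceil>t / h\<rceil>) * h"
    using h_pos by (simp add: divide_le_eq)
qed (use assms in auto)

lemma Sup_abs_x_minus_z_le:
  "Sup ((\<lambda>t. \<bar>x t - z t\<bar>) ` {0..T})
    \<le> exp (integral {0..T} a) * integral {0..T} a * mod_x q x (mod_r r (q / real k) T + 2 * (q / real k)) T"
  unfolding int_a_def[symmetric] h_def[symmetric] W_def[symmetric]
proof (rule cSup_least)
  fix y
  assume "y \<in> (\<lambda>t. \<bar>x t - z t\<bar>) ` {0..T}"
  then obtain t where t: "t \<in> {0..T}" and y: "y = \<bar>x t - z t\<bar>"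
    by blast
  have "exp (int_a t) - 1 \<le> exp (int_a T) - 1"
    using int_a_mono t by simp
  also have "\<dots> \<le> int_a T * exp (int_a T)"
    by (rule exp_minus_one_le_mult_exp[OF int_a_nonneg])
  finally have "majorant t \<le> W * (int_a T * exp (int_a T))"
    unfolding majorant_def by (rule mult_left_mono[OF _ W_nonneg])
  then show "y \<le> exp (int_a T) * int_a T * W"
    using abs_x_minus_z_le_majorant[OF t] unfolding y by (simp add: mult_ac)
qed (use T_pos in auto)

lemma Sup_abs_x_minus_z_nonneg: "0 \<le> Sup ((\<lambda>t. \<bar>x t - z t\<bar>) ` {0..T})"
proof -
  have "bdd_above ((\<lambda>t. \<bar>x t - z t\<bar>) ` {0..T})"
    using abs_x_minus_z_le_majorant majorant_mono
    by (intro bdd_aboveI2[of _ _ "majorant T"]) (meson atLeastAtMost_iff order_trans)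
  then have "\<bar>x 0 - z 0\<bar> \<le> Sup ((\<lambda>t. \<bar>x t - z t\<bar>) ` {0..T})"
    by (rule cSup_upper[rotated]) (use T_pos in auto)
  then show ?thesis
    by linarith
qed

end

lemma mod_x_mod_r_grid_tendsto_0:
  fixes x r :: "real \<Rightarrow> real"
  assumes "0 \<le> T" "0 < q" "continuous_on {-q..T} x" "continuous_on {0..T} r"
  shows "(\<lambda>k. mod_x q x (mod_r r (q / real k) T + 2 * (q / real k)) T) \<longlonglongrightarrow> 0"
proof -
  have "filterlim (\<lambda>\<delta>. mod_r r \<delta> T + 2 * \<delta>) (at_right 0) (at_right 0)"
  proof (rule tendsto_imp_filterlim_at_right)
    show "((\<lambda>\<delta>. mod_r r \<delta> T + 2 * \<delta>) \<longlongrightarrow> 0) (at_right 0)"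
      unfolding mod_r_eq_modulus
      using tendsto_add[OF modulus_tendsto_0[OF assms(4)] tendsto_mult_right_zero[OF tendsto_ident_at]]
        assms(1) by simp
    have "0 < mod_r r \<delta> T + 2 * \<delta>" if "0 < \<delta>" for \<delta>
      using modulus_nonneg[OF assms(4) assms(1), of \<delta>] that unfolding mod_r_eq_modulus by simp
    then show "\<forall>\<^sub>F \<delta> in at_right 0. 0 < mod_r r \<delta> T + 2 * \<delta>"
      using eventually_at_right_less by (rule eventually_mono[rotated]) blast
  qed
  then have "((\<lambda>\<delta>. mod_x q x (mod_r r \<delta> T + 2 * \<delta>) T) \<longlongrightarrow> 0) (at_right 0)"
    unfolding mod_x_eq_modulus using assms(1,2)
    by (intro filterlim_compose[OF modulus_tendsto_0[OF assms(3)]]) simp_all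
  moreover have "filterlim (\<lambda>k. q / real k) (at_right 0) sequentially"
    using assms(2)
    by (intro tendsto_imp_filterlim_at_right[OF lim_const_over_n])
      (auto intro: eventually_sequentiallyI[of 1])
  ultimately show ?thesis
    by (rule filterlim_compose)
qed

theorem theorem3p2:
  fixes q :: real and a r \<phi> x :: "real \<Rightarrow> real" and z :: "nat \<Rightarrow> real \<Rightarrow> real"
  assumes "q > 0"
    and "continuous_on {0..} a" and "\<forall>t\<ge>0. a t \<ge> 0"
    and "continuous_on {0..} r" and "\<forall>t\<ge>0. 0 \<le> r t \<and> r t \<le> q"
    and "continuous_on {-q..0} \<phi>"
    and "is_sol_x q a r \<phi> x"
    and "\<forall>k\<ge>1. is_sol_z q a r \<phi> k (z k)"
  shows "(\<forall>k\<ge>1. \<forall>T>0.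
            Sup ((\<lambda>t. \<bar>x t - z k t\<bar>) ` {0..T})
              \<le> exp (integral {0..T} a) * integral {0..T} a
                 * mod_x q x (mod_r r (q / real k) T + 2 * (q / real k)) T)
       \<and> (\<forall>T>0. (\<lambda>k. Sup ((\<lambda>t. \<bar>x t - z k t\<bar>) ` {0..T})) \<longlonglongrightarrow> 0)"
proof -
  have setting: "pca_approximation q T a r \<phi> x (z k) k" if "k \<ge> 1" "T > 0" for k T
    using assms that by (simp add: pca_approximation_def)
  have "(\<lambda>k. Sup ((\<lambda>t. \<bar>x t - z k t\<bar>) ` {0..T})) \<longlonglongrightarrow> 0" if "T > 0" for T
  proof (rule tendsto_sandwich[OF _ _ tendsto_const tendsto_mult_right_zero])
    show "(\<lambda>k. mod_x q x (mod_r r (q / real k) T + 2 * (q / real k)) T) \<longlonglongrightarrow> 0"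
      using assms(1,4,7) that
      by (intro mod_x_mod_r_grid_tendsto_0) (auto simp: is_sol_x_def intro: continuous_on_subset)
    show "\<forall>\<^sub>F k in sequentially. 0 \<le> Sup ((\<lambda>t. \<bar>x t - z k t\<bar>) ` {0..T})"
      using pca_approximation.Sup_abs_x_minus_z_nonneg[OF setting] that
      by (intro eventually_sequentiallyI[of 1]) simp
    show "\<forall>\<^sub>F k in sequentially. Sup ((\<lambda>t. \<bar>x t - z k t\<bar>) ` {0..T})
        \<le> exp (integral {0..T} a) * integral {0..T} a
          * mod_x q x (mod_r r (q / real k) T + 2 * (q / real k)) T"
      using pca_approximation.Sup_abs_x_minus_z_le[OF setting] that
      by (intro eventually_sequentiallyI[of 1]) simp
  qed
  then show ?thesis
    using pca_approximation.Sup_abs_x_minus_z_le[OF setting] by blast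
qed

end
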